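(* Let $(A,\Delta)$ be a regular multiplier Hopf algebra acting on an algebra $R$ (so $R$ is a left $A$-module algebra). Let $C$ be an algebra over $\mathbb C$ with non-degenerate product and let $\pi_A:A\to M(C)$ and $\pi_R:R\to M(C)$ be algebra homomorphisms such that $$\pi_A(a)\pi_R(x)=\sum \pi_R(a_{(1)}x)\pi_A(a_{(2)})$$ for all $a\in A$, $x\in R$. Then the linear map $\pi:R\# A\to M(C)$ given by $\pi(x\# a)=\pi_R(x)\pi_A(a)$ is an algebra homomorphism.
   Context: Algebras are over $\mathbb C$, possibly without identity, with non-degenerate product; $M(\cdot)$ is the multiplier algebra. A regular multiplier Hopf algebra is a pair $(A,\Delta)$ with $\Delta:A\to M(A\otimes A)$ a coassociative homomorphism such that $\Delta(a)(1\otimes b),(a\otimes 1)\Delta(b),\Delta(a)(b\otimes 1),(1\otimes a)\Delta(b)\in A\otimes A$, the maps $a\otimes b\mapsto\Delta(a)(1\otimes b)$, $a\otimes b\mapsto(a\otimes 1)\Delta(b)$ are bijective, and likewise for the flipped comultiplication; Sweedler notation is used with legs covered. A left $A$-module algebra is an algebra $R$ with non-degenerate product which is a unital left $A$-module ($AR=R$) with $a(xx')=\sum(a_{(1)}x)(a_{(2)}x')$. For $a\in A$, $x\in R$, the element $\sum a_{(1)}x\otimes a_{(2)}\in R\otimes A$ is well defined ($x$ covers $a_{(1)}$), and $\sum\pi_R(a_{(1)}x)\pi_A(a_{(2)})$ is the image of it under $y\otimes b\mapsto\pi_R(y)\pi_A(b)$. The smash product $R\# A$ is $R\otimes A$ with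 product $(x\# a)(x'\# a')=\sum x(a_{(1)}x')\# a_{(2)}a'$. *)

theory Defs
  imports Complex_Main
begin

section \<open>Algebras over the complex numbers (possibly without identity)\<close>

class calg = ring +
  fixes csc :: "complex \<Rightarrow> 'a \<Rightarrow> 'a"
  assumes csc_add_right: "csc c (x + y) = csc c x + csc c y"
    and csc_add_left: "csc (c + d) x = csc c x + csc d x"
    and csc_csc: "csc c (csc d x) = csc (c * d) x"
    and csc_one: "csc 1 x = x"
    and mult_csc_left: "csc c x * y = csc c (x * y)"
    and mult_csc_right: "x * csc c y = csc c (x * y)"

definition nondeg :: "'x set \<Rightarrow> 'x \<Rightarrow> ('x \<Rightarrow> 'x \<Rightarrow> 'x) \<Rightarrow> bool" where
  "nondeg S z mul \<longleftrightarrow>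
     (\<forall>x\<in>S. (\<forall>y\<in>S. mul x y = z) \<longrightarrow> x = z) \<and> (\<forall>x\<in>S. (\<forall>y\<in>S. mul y x = z) \<longrightarrow> x = z)"

section \<open>Algebraic tensor products (realised inside the dual of the bilinear forms)\<close>

definition bilin :: "('v::calg \<Rightarrow> 'w::calg \<Rightarrow> complex) \<Rightarrow> bool" where
  "bilin \<phi> \<longleftrightarrow>
     (\<forall>v v' w. \<phi> (v + v') w = \<phi> v w + \<phi> v' w) \<and> (\<forall>v w w'. \<phi> v (w + w') = \<phi> v w + \<phi> v w') \<and>
     (\<forall>c v w. \<phi> (csc c v) w = c * \<phi> v w) \<and> (\<forall>c v w. \<phi> v (csc c w) = c * \<phi> v w)"

definition trilin :: "('u::calg \<Rightarrow> 'v::calg \<Rightarrow> 'w::calg \<Rightarrow> complex) \<Rightarrow> bool" where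
  "trilin \<chi> \<longleftrightarrow> (\<forall>u. bilin (\<chi> u)) \<and> (\<forall>w. bilin (\<lambda>u v. \<chi> u v w))"

type_synonym ('v, 'w) tf = "('v \<Rightarrow> 'w \<Rightarrow> complex) \<Rightarrow> complex"

text \<open>The element \<open>\<Sum> v_i \<otimes> w_i\<close> of V\<otimes>W, seen as the functional \<open>\<phi> \<mapsto> \<Sum> \<phi> v_i w_i\<close>
  on bilinear forms (bilinear forms separate the points of V\<otimes>W).\<close>
definition tens :: "('v::calg \<times> 'w::calg) list \<Rightarrow> ('v, 'w) tf" where
  "tens xs = (\<lambda>\<phi>. if bilin \<phi> then sum_list (map (\<lambda>(v, w). \<phi> v w) xs) else 0)"

definition tensors :: "('v::calg, 'w::calg) tf set" where
  "tensors = range tens"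

definition tp :: "'v::calg \<Rightarrow> 'w::calg \<Rightarrow> ('v, 'w) tf" where
  "tp v w = tens [(v, w)]"

definition tzero :: "('v, 'w) tf" where "tzero = (\<lambda>\<phi>. 0)"
definition tadd :: "('v, 'w) tf \<Rightarrow> ('v, 'w) tf \<Rightarrow> ('v, 'w) tf" where
  "tadd t s = (\<lambda>\<phi>. t \<phi> + s \<phi>)"
definition tsc :: "complex \<Rightarrow> ('v, 'w) tf \<Rightarrow> ('v, 'w) tf" where
  "tsc c t = (\<lambda>\<phi>. c * t \<phi>)"

text \<open>Product of the tensor product algebra: \<open>(a\<otimes>b)(c\<otimes>d) = ac\<otimes>bd\<close>.\<close>
definition tmul :: "('a::calg, 'b::calg) tf \<Rightarrow> ('a, 'b) tf \<Rightarrow> ('a, 'b) tf" where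
  "tmul t s = (\<lambda>\<phi>. if bilin \<phi> then t (\<lambda>a b. s (\<lambda>c d. \<phi> (a * c) (b * d))) else 0)"

definition tflip :: "('a::calg, 'b::calg) tf \<Rightarrow> ('b, 'a) tf" where
  "tflip t = (\<lambda>\<phi>. t (\<lambda>x y. \<phi> y x))"

text \<open>Image of a tensor under the linear map induced by a bilinear map \<open>\<beta>\<close>
  into a vector space with zero z and addition add.\<close>
definition tmap :: "'y \<Rightarrow> ('y \<Rightarrow> 'y \<Rightarrow> 'y) \<Rightarrow> ('v::calg \<Rightarrow> 'w::calg \<Rightarrow> 'y) \<Rightarrow> ('v, 'w) tf \<Rightarrow> 'y" where
  "tmap z add \<beta> t = foldr (\<lambda>(v, w) acc. add (\<beta> v w) acc) (SOME xs. tens xs = t) z"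

section \<open>Multiplier algebras (double centralisers)\<close>

type_synonym 'x mltp = "('x \<Rightarrow> 'x) \<times> ('x \<Rightarrow> 'x)"

definition lin_on :: "'x set \<Rightarrow> ('x \<Rightarrow> 'x \<Rightarrow> 'x) \<Rightarrow> (complex \<Rightarrow> 'x \<Rightarrow> 'x) \<Rightarrow> ('x \<Rightarrow> 'x) \<Rightarrow> bool" where
  "lin_on S add sc f \<longleftrightarrow> (\<forall>x\<in>S. \<forall>y\<in>S. f (add x y) = add (f x) (f y)) \<and> (\<forall>c. \<forall>x\<in>S. f (sc c x) = sc c (f x))"

text \<open>A multiplier of the algebra (S, z, add, mul, sc): a pair (L, R) of linear maps of S
  with \<open>x L(y) = R(x) y\<close>; the maps are normalised to z outside S.\<close>
definition is_mult :: "'x set \<Rightarrow> 'x \<Rightarrow> ('x \<Rightarrow> 'x \<Rightarrow> 'x) \<Rightarrow> ('x \<Rightarrow> 'x \<Rightarrow> 'x) \<Rightarrow> (complex \<Rightarrow> 'x \<Rightarrow> 'x) \<Rightarrow> 'x mltp \<Rightarrow> bool" where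
  "is_mult S z add mul sc m \<longleftrightarrow>
     (\<forall>x\<in>S. fst m x \<in> S \<and> snd m x \<in> S) \<and> (\<forall>x. x \<notin> S \<longrightarrow> fst m x = z \<and> snd m x = z) \<and>
     lin_on S add sc (fst m) \<and> lin_on S add sc (snd m) \<and>
     (\<forall>x\<in>S. \<forall>y\<in>S. mul x (fst m y) = mul (snd m x) y)"

definition mmul :: "'x mltp \<Rightarrow> 'x mltp \<Rightarrow> 'x mltp" where
  "mmul m n = (fst m \<circ> fst n, snd n \<circ> snd m)"

definition madd :: "('x \<Rightarrow> 'x \<Rightarrow> 'x) \<Rightarrow> 'x mltp \<Rightarrow> 'x mltp \<Rightarrow> 'x mltp" where
  "madd add m n = (\<lambda>x. add (fst m x) (fst n x), \<lambda>x. add (snd m x) (snd n x))"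

definition msc :: "(complex \<Rightarrow> 'x \<Rightarrow> 'x) \<Rightarrow> complex \<Rightarrow> 'x mltp \<Rightarrow> 'x mltp" where
  "msc sc c m = (\<lambda>x. sc c (fst m x), \<lambda>x. sc c (snd m x))"

definition mzero :: "'x \<Rightarrow> 'x mltp" where
  "mzero z = (\<lambda>x. z, \<lambda>x. z)"

definition memb :: "'x set \<Rightarrow> 'x \<Rightarrow> ('x \<Rightarrow> 'x \<Rightarrow> 'x) \<Rightarrow> 'x \<Rightarrow> 'x mltp" where
  "memb S z mul u = (\<lambda>x. if x \<in> S then mul u x else z, \<lambda>x. if x \<in> S then mul x u else z)"

abbreviation MC :: "'c::calg mltp \<Rightarrow> bool" where
  "MC m \<equiv> is_mult UNIV 0 (+) (*) csc m"
abbreviation MCmul :: "'c::calg mltp \<Rightarrow> 'c mltp \<Rightarrow> 'c mltp" where "MCmul \<equiv> mmul"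
abbreviation MCadd :: "'c::calg mltp \<Rightarrow> 'c mltp \<Rightarrow> 'c mltp" where "MCadd \<equiv> madd (+)"
abbreviation MCsc :: "complex \<Rightarrow> 'c::calg mltp \<Rightarrow> 'c mltp" where "MCsc \<equiv> msc csc"
abbreviation MCzero :: "'c::calg mltp" where "MCzero \<equiv> mzero 0"

definition hom_MC :: "('a::calg \<Rightarrow> 'c::calg mltp) \<Rightarrow> bool" where
  "hom_MC f \<longleftrightarrow> (\<forall>a. MC (f a)) \<and> (\<forall>a b. f (a + b) = MCadd (f a) (f b)) \<and>
     (\<forall>c a. f (csc c a) = MCsc c (f a)) \<and> (\<forall>a b. f (a * b) = MCmul (f a) (f b))"

abbreviation MT :: "('a::calg, 'b::calg) tf mltp \<Rightarrow> bool" where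
  "MT m \<equiv> is_mult tensors tzero tadd tmul tsc m"

abbreviation temb :: "('a::calg, 'b::calg) tf \<Rightarrow> ('a, 'b) tf mltp" where
  "temb u \<equiv> memb tensors tzero tmul u"

definition one_tp :: "'b::calg \<Rightarrow> ('a::calg, 'b) tf mltp" where
  "one_tp b = (\<lambda>t. if t \<in> tensors then (\<lambda>\<phi>. if bilin \<phi> then t (\<lambda>x y. \<phi> x (b * y)) else 0) else tzero,
               \<lambda>t. if t \<in> tensors then (\<lambda>\<phi>. if bilin \<phi> then t (\<lambda>x y. \<phi> x (y * b)) else 0) else tzero)"

definition tp_one :: "'a::calg \<Rightarrow> ('a, 'b::calg) tf mltp" where
  "tp_one a = (\<lambda>t. if t \<in> tensors then (\<lambda>\<phi>. if bilin \<phi> then t (\<lambda>x y. \<phi> (a * x) y) else 0) else tzero,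
               \<lambda>t. if t \<in> tensors then (\<lambda>\<phi>. if bilin \<phi> then t (\<lambda>x y. \<phi> (x * a) y) else 0) else tzero)"

type_synonym 'a comult = "'a \<Rightarrow> ('a, 'a) tf mltp"

definition cov1 :: "'a::calg comult \<Rightarrow> 'a \<Rightarrow> 'a \<Rightarrow> ('a, 'a) tf" where
  "cov1 D a b = (THE u. u \<in> tensors \<and> mmul (D a) (one_tp b) = temb u)"
definition cov2 :: "'a::calg comult \<Rightarrow> 'a \<Rightarrow> 'a \<Rightarrow> ('a, 'a) tf" where
  "cov2 D a b = (THE u. u \<in> tensors \<and> mmul (tp_one a) (D b) = temb u)"
definition cov3 :: "'a::calg comult \<Rightarrow> 'a \<Rightarrow> 'a \<Rightarrow> ('a, 'a) tf" where
  "cov3 D a b = (THE u. u \<in> tensors \<and> mmul (D a) (tp_one b) = temb u)"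

text \<open>The linear maps \<open>a\<otimes>b \<mapsto> \<Delta>(a)(1\<otimes>b)\<close> and \<open>a\<otimes>b \<mapsto> (a\<otimes>1)\<Delta>(b)\<close> on A\<otimes>A.\<close>
definition T1 :: "'a::calg comult \<Rightarrow> ('a, 'a) tf \<Rightarrow> ('a, 'a) tf" where
  "T1 D t = (\<lambda>\<phi>. if bilin \<phi> then t (\<lambda>a b. cov1 D a b \<phi>) else 0)"
definition T2 :: "'a::calg comult \<Rightarrow> ('a, 'a) tf \<Rightarrow> ('a, 'a) tf" where
  "T2 D t = (\<lambda>\<phi>. if bilin \<phi> then t (\<lambda>a b. cov2 D a b \<phi>) else 0)"

definition cop :: "'a::calg comult \<Rightarrow> 'a comult" where
  "cop D a = (\<lambda>t. tflip (fst (D a) (tflip t)), \<lambda>t. tflip (snd (D a) (tflip t)))"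

definition covering_bij :: "'a::calg comult \<Rightarrow> bool" where
  "covering_bij D \<longleftrightarrow>
     (\<forall>a b. \<exists>u\<in>tensors. mmul (D a) (one_tp b) = temb u) \<and>
     (\<forall>a b. \<exists>u\<in>tensors. mmul (tp_one a) (D b) = temb u) \<and>
     (\<forall>a b. \<exists>u\<in>tensors. mmul (D a) (tp_one b) = temb u) \<and>
     (\<forall>a b. \<exists>u\<in>tensors. mmul (one_tp a) (D b) = temb u) \<and>
     bij_betw (T1 D) tensors tensors \<and> bij_betw (T2 D) tensors tensors"

text \<open>Coassociativity in the multiplier sense:
  \<open>(a\<otimes>1\<otimes>1)(\<Delta>\<otimes>\<iota>)(\<Delta>(b)(1\<otimes>c)) = (\<iota>\<otimes>\<Delta>)((a\<otimes>1)\<Delta>(b))(1\<otimes>1\<otimes>c)\<close> in A\<otimes>A\<otimes>A,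
  tested against all trilinear forms.\<close>
definition coassoc :: "'a::calg comult \<Rightarrow> bool" where
  "coassoc D \<longleftrightarrow> (\<forall>a b c \<chi>. trilin \<chi> \<longrightarrow>
      cov1 D b c (\<lambda>p q. cov2 D a p (\<lambda>x y. \<chi> x y q)) =
      cov2 D a b (\<lambda>r s. cov1 D s c (\<lambda>y z. \<chi> r y z)))"

definition regular_mha :: "'a::calg comult \<Rightarrow> bool" where
  "regular_mha D \<longleftrightarrow>
     nondeg (UNIV :: 'a set) 0 (*) \<and>
     (\<forall>a. MT (D a)) \<and>
     (\<forall>a b. D (a + b) = madd tadd (D a) (D b)) \<and> (\<forall>c a. D (csc c a) = msc tsc c (D a)) \<and>
     (\<forall>a b. D (a * b) = mmul (D a) (D b)) \<and>
     coassoc D \<and> covering_bij D \<and> covering_bij (cop D)"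

text \<open>\<open>\<Sum> a_(1) x \<otimes> a_(2) \<in> R\<otimes>A\<close>: write \<open>x = \<Sum> b_j y_j\<close> (possible as AR = R) and take
  \<open>\<Sum>_j (\<triangleright> y_j \<otimes> \<iota>)(\<Delta>(a)(b_j\<otimes>1))\<close>.\<close>
definition sw :: "'a::calg comult \<Rightarrow> ('a \<Rightarrow> 'r::calg \<Rightarrow> 'r) \<Rightarrow> 'a \<Rightarrow> 'r \<Rightarrow> ('r, 'a) tf" where
  "sw D act a x = (\<lambda>\<psi>. if bilin \<psi> then
      sum_list (map (\<lambda>(b, y). cov3 D a b (\<lambda>c d. \<psi> (act c y) d))
        (SOME ds. x = sum_list (map (\<lambda>(b, y). act b y) ds)))
    else 0)"

definition module_algebra :: "'a::calg comult \<Rightarrow> ('a \<Rightarrow> 'r::calg \<Rightarrow> 'r) \<Rightarrow> bool" where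
  "module_algebra D act \<longleftrightarrow>
     nondeg (UNIV :: 'r set) 0 (*) \<and>
     (\<forall>a a' x. act (a + a') x = act a x + act a' x) \<and> (\<forall>a x x'. act a (x + x') = act a x + act a x') \<and>
     (\<forall>c a x. act (csc c a) x = csc c (act a x)) \<and> (\<forall>c a x. act a (csc c x) = csc c (act a x)) \<and>
     (\<forall>a b x. act (a * b) x = act a (act b x)) \<and>
     (\<forall>x. \<exists>ds. x = sum_list (map (\<lambda>(b, y). act b y) ds)) \<and>
     (\<forall>a x x'. act a (x * x') = tmap 0 (+) (\<lambda>y b. y * act b x') (sw D act a x))"

text \<open>Product of the smash product R#A = R\<otimes>A:
  \<open>(x#a)(x'#a') = \<Sum> x(a_(1)x') # a_(2)a'\<close>, extended bilinearly.\<close>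
definition smash_mul :: "'a::calg comult \<Rightarrow> ('a \<Rightarrow> 'r::calg \<Rightarrow> 'r) \<Rightarrow> ('r, 'a) tf \<Rightarrow> ('r, 'a) tf \<Rightarrow> ('r, 'a) tf" where
  "smash_mul D act t s = (\<lambda>\<psi>. if bilin \<psi> then
      t (\<lambda>x a. s (\<lambda>x' a'. sw D act a x' (\<lambda>y b. \<psi> (x * y) (b * a')))) else 0)"

end

theory Submission
  imports Defs
begin

text \<open>
  Tensors are handled as explicit finite sums \<open>\<Sum> v\<^sub>i \<otimes> w\<^sub>i\<close>. Since linear functionals separate the
  points of a complex vector space, such a sum vanishes as soon as it vanishes on all products
  \<open>\<rho> \<otimes> \<omega>\<close> of linear functionals; together with the non-degeneracy of A and R this shows that
  \<open>\<Delta>(a)(b \<otimes> 1)\<close> is determined by its products with elementary tensors, and that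
  \<open>\<Sum>\<^sub>j (\<triangleright>y\<^sub>j \<otimes> \<iota>)(\<Delta>(a)(b\<^sub>j \<otimes> 1))\<close> only depends on \<open>x = \<Sum>\<^sub>j b\<^sub>j y\<^sub>j\<close>, because after
  multiplication by \<open>1 \<otimes> e\<close> it becomes \<open>(\<triangleright>x \<otimes> \<iota>)(\<Delta>(a)(1 \<otimes> e))\<close>. Hence
  \<open>\<Sum> a\<^sub>(\<^sub>1\<^sub>)x \<otimes> a\<^sub>(\<^sub>2\<^sub>)\<close> is bilinear in \<open>(a, x)\<close>, the smash product of two finite sums is again
  one, and the commutation relation gives
  \<open>\<pi>((x # a)(x' # a')) = \<Sum> \<pi>\<^sub>R(x)\<pi>\<^sub>R(a\<^sub>(\<^sub>1\<^sub>)x')\<pi>\<^sub>A(a\<^sub>(\<^sub>2\<^sub>))\<pi>\<^sub>A(a') = \<pi>\<^sub>R(x)\<pi>\<^sub>A(a)\<pi>\<^sub>R(x')\<pi>\<^sub>A(a')\<close>.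
\<close>

lemma sum_list_swap:
  fixes f :: "'x \<Rightarrow> 'y \<Rightarrow> 'z::comm_monoid_add"
  shows "(\<Sum>x\<leftarrow>L. \<Sum>y\<leftarrow>M. f x y) = (\<Sum>y\<leftarrow>M. \<Sum>x\<leftarrow>L. f x y)"
  by (induct L) (simp_all add: sum_list_addf)

lemma sum_list_sum_swap:
  "finite F \<Longrightarrow> (\<Sum>x\<leftarrow>L. sum (f x) F) = (\<Sum>b\<in>F. \<Sum>x\<leftarrow>L. f x b)"
  by (induct L) (simp_all add: sum.distrib)

interpretation cvs: vector_space "csc :: complex \<Rightarrow> 'a::calg \<Rightarrow> 'a"
  by unfold_locales (simp_all add: csc_add_right csc_add_left csc_csc csc_one)

definition clinear :: "('a::calg \<Rightarrow> 'b::calg) \<Rightarrow> bool" where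
  "clinear f \<longleftrightarrow> (\<forall>x y. f (x + y) = f x + f y) \<and> (\<forall>c x. f (csc c x) = csc c (f x))"

lemma clinearD:
  assumes "clinear f"
  shows clinear_add: "f (x + y) = f x + f y"
    and clinear_csc: "f (csc c x) = csc c (f x)"
    and clinear_zero: "f 0 = 0"
  using assms unfolding clinear_def by (auto, metis cvs.scale_zero_left)

lemma clinear_sum_list: "clinear f \<Longrightarrow> f (sum_list (map g L)) = (\<Sum>x\<leftarrow>L. f (g x))"
  by (induct L) (simp_all add: clinearD)

lemma clinear_mult_left: "clinear ((*) c)"
  and clinear_mult_right: "clinear (\<lambda>x. x * c)"
  and clinear_id: "clinear (\<lambda>x. x)"
  by (simp_all add: clinear_def distrib_left distrib_right mult_csc_left mult_csc_right)

lemma clinear_scale: "clinear (csc k)"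
  by (simp add: clinear_def csc_add_right csc_csc mult.commute)

definition linear_functional :: "('a::calg \<Rightarrow> complex) \<Rightarrow> bool" where
  "linear_functional l \<longleftrightarrow> (\<forall>x y. l (x + y) = l x + l y) \<and> (\<forall>c x. l (csc c x) = c * l x)"

lemma linear_functionalD:
  assumes "linear_functional l"
  shows linear_functional_add: "l (x + y) = l x + l y"
    and linear_functional_csc: "l (csc c x) = c * l x"
    and linear_functional_zero: "l 0 = 0"
  using assms unfolding linear_functional_def by (auto, metis cvs.scale_zero_left mult_zero_left)

lemma linear_functional_sum_list:
  "linear_functional l \<Longrightarrow> l (sum_list (map g L)) = (\<Sum>x\<leftarrow>L. l (g x))"
  by (induct L) (simp_all add: linear_functionalD)

definition coord :: "'a::calg \<Rightarrow> 'a \<Rightarrow> complex" where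
  "coord b v = cvs.representation (cvs.extend_basis {}) v b"

lemma
  shows independent_Hamel_basis: "cvs.independent (cvs.extend_basis {} :: 'a::calg set)"
    and span_Hamel_basis: "cvs.span (cvs.extend_basis {} :: 'a::calg set) = UNIV"
  by (simp_all add: cvs.independent_extend_basis cvs.independent_empty)

lemma linear_functional_coord: "linear_functional (coord b)"
proof -
  have s: "v \<in> cvs.span (cvs.extend_basis {})" for v :: 'a
    by (simp add: span_Hamel_basis)
  show ?thesis unfolding linear_functional_def coord_def
    using cvs.representation_add[OF independent_Hamel_basis s s]
      cvs.representation_scale[OF independent_Hamel_basis s] by simp
qed

lemma finite_coord_support: "finite {b. coord b v \<noteq> 0}"
  unfolding coord_def by (rule cvs.finite_representation)

lemma sum_coord:
  assumes "finite F" and "{b. coord b v \<noteq> 0} \<subseteq> F"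
  shows "(\<Sum>b\<in>F. csc (coord b v) b) = v"
proof -
  have "(\<Sum>b\<in>F. csc (coord b v) b) = (\<Sum>b | coord b v \<noteq> 0. csc (coord b v) b)"
    by (rule sum.mono_neutral_right) (use assms in auto)
  also have "\<dots> = v"
    unfolding coord_def using cvs.sum_nonzero_representation_eq[OF independent_Hamel_basis]
    by (simp add: span_Hamel_basis)
  finally show ?thesis .
qed

lemma eq_0_if_linear_functionals_vanish:
  assumes "\<And>l. linear_functional l \<Longrightarrow> l (v::'a::calg) = 0"
  shows "v = 0"
  using sum_coord[of "{}" v] assms linear_functional_coord by auto

section \<open>Tensors represented by lists of pairs\<close>

definition pair_sum :: "('v \<times> 'w) list \<Rightarrow> ('v \<Rightarrow> 'w \<Rightarrow> complex) \<Rightarrow> complex" where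
  "pair_sum L \<phi> = sum_list (map (\<lambda>(v, w). \<phi> v w) L)"

lemma pair_sum_simps [simp]:
  "pair_sum [] \<phi> = 0"
  "pair_sum ((v, w) # L) \<phi> = \<phi> v w + pair_sum L \<phi>"
  "pair_sum (L @ M) \<phi> = pair_sum L \<phi> + pair_sum M \<phi>"
  by (simp_all add: pair_sum_def)

lemma pair_sum_conv_sum_list: "pair_sum L \<phi> = (\<Sum>x\<leftarrow>L. \<phi> (fst x) (snd x))"
  by (simp add: pair_sum_def split_def)

lemma pair_sum_map:
  "pair_sum (map (\<lambda>(p, q). (f p q, g p q)) L) \<phi> = pair_sum L (\<lambda>p q. \<phi> (f p q) (g p q))"
  by (induct L) auto

lemma pair_sum_concat_map:
  "pair_sum (concat (map (\<lambda>(p, q). H p q) L)) \<phi> = pair_sum L (\<lambda>p q. pair_sum (H p q) \<phi>)"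
  by (induct L) auto

lemma pair_sum_add_fun: "pair_sum L (\<lambda>p q. f p q + g p q) = pair_sum L f + pair_sum L g"
  by (induct L) auto

lemma pair_sum_cmult: "pair_sum L (\<lambda>p q. c * f p q) = c * pair_sum L f"
  by (induct L) (auto simp: distrib_left)

lemma pair_sum_uminus: "pair_sum L (\<lambda>p q. - f p q) = - pair_sum L f"
  by (induct L) auto

lemma pair_sum_zero_fun [simp]: "pair_sum L (\<lambda>p q. 0) = 0"
  by (induct L) auto

lemma tens_bilin: "bilin \<phi> \<Longrightarrow> tens L \<phi> = pair_sum L \<phi>"
  by (simp add: tens_def pair_sum_def)

lemma tens_conv_pair_sum: "tens L = (\<lambda>\<phi>. if bilin \<phi> then pair_sum L \<phi> else 0)"
  unfolding tens_def pair_sum_def by (rule refl)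

lemma tens_eqI: "(\<And>\<phi>. bilin \<phi> \<Longrightarrow> pair_sum L \<phi> = pair_sum M \<phi>) \<Longrightarrow> tens L = tens M"
  by (rule ext) (simp add: tens_def pair_sum_def)

lemma tens_eqD: "tens L = tens M \<Longrightarrow> bilin \<phi> \<Longrightarrow> pair_sum L \<phi> = pair_sum M \<phi>"
  by (metis tens_bilin)

lemma tensorsE: "t \<in> tensors \<Longrightarrow> (\<And>L. t = tens L \<Longrightarrow> P) \<Longrightarrow> P"
  unfolding tensors_def by blast

lemma tens_in_tensors [simp]: "tens L \<in> tensors"
  unfolding tensors_def by blast

lemma bilinD:
  assumes "bilin \<phi>"
  shows bilin_add_left: "\<phi> (v + v') w = \<phi> v w + \<phi> v' w"
    and bilin_add_right: "\<phi> v (w + w') = \<phi> v w + \<phi> v w'"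
    and bilin_csc_left: "\<phi> (csc c v) w = c * \<phi> v w"
    and bilin_csc_right: "\<phi> v (csc c w) = c * \<phi> v w"
  using assms unfolding bilin_def by blast+

lemma bilin_zero:
  assumes "bilin \<phi>"
  shows bilin_zero_left: "\<phi> 0 w = 0" and bilin_zero_right: "\<phi> v 0 = 0"
  using bilin_csc_left[OF assms, of 0 0] bilin_csc_right[OF assms, of _ 0 0] by simp_all

lemma bilin_uminus_left: "bilin \<phi> \<Longrightarrow> \<phi> (- v) w = - \<phi> v w"
  using bilin_csc_left[of \<phi> "-1" v w] cvs.scale_minus_left[of 1 v] by simp

lemma bilin_sum_list_left: "bilin \<phi> \<Longrightarrow> \<phi> (sum_list (map g L)) w = (\<Sum>x\<leftarrow>L. \<phi> (g x) w)"
  by (induct L) (simp_all add: bilin_zero bilinD)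

lemma bilin_sum_right:
  assumes "bilin \<phi>" and "finite F"
  shows "\<phi> v (sum g F) = (\<Sum>x\<in>F. \<phi> v (g x))"
  using assms(2) by (induct F rule: finite_induct) (simp_all add: bilin_zero[OF assms(1)] bilinD[OF assms(1)])

lemma bilin_product_functionals:
  "linear_functional \<rho> \<Longrightarrow> linear_functional \<omega> \<Longrightarrow> bilin (\<lambda>v w. \<rho> v * \<omega> w)"
  unfolding bilin_def by (simp add: linear_functionalD algebra_simps)

lemma bilin_compose_clinear:
  "bilin \<phi> \<Longrightarrow> clinear f \<Longrightarrow> clinear g \<Longrightarrow> bilin (\<lambda>x y. \<phi> (f x) (g y))"
  unfolding bilin_def by (simp add: clinearD)

lemma bilin_pair_sum:
  "(\<And>c d. (c, d) \<in> set M \<Longrightarrow> bilin (\<lambda>a b. G a b c d)) \<Longrightarrow> bilin (\<lambda>a b. pair_sum M (G a b))"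
proof (induct M)
  case Nil
  then show ?case by (simp add: bilin_def)
next
  case (Cons cd M)
  then show ?case
    by (cases cd) (simp add: bilin_def algebra_simps)
qed

lemma pair_sum_negate_left: "bilin \<phi> \<Longrightarrow> pair_sum (map (\<lambda>(p, q). (- p, q)) L) \<phi> = - pair_sum L \<phi>"
  by (simp add: pair_sum_map bilin_uminus_left pair_sum_uminus)

text \<open>Expanding the second components in a Hamel basis leaves the forms \<open>\<phi> (\<cdot>) b\<close> applied
  to elements \<open>z b\<close>, which vanish because linear functionals separate points.\<close>

lemma pair_sum_eq_0_if_product_functionals_vanish:
  fixes L :: "('v::calg \<times> 'w::calg) list"
  assumes vanish: "\<And>\<rho> \<omega>. linear_functional \<rho> \<Longrightarrow> linear_functional \<omega> \<Longrightarrow>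
      pair_sum L (\<lambda>v w. \<rho> v * \<omega> w) = 0"
    and \<phi>: "bilin \<phi>"
  shows "pair_sum L \<phi> = 0"
proof -
  define F where "F = (\<Union>p\<in>set L. {b. coord b (snd p) \<noteq> 0})"
  have "finite F"
    unfolding F_def using finite_coord_support by auto
  have expand: "\<phi> v w = (\<Sum>b\<in>F. \<phi> (csc (coord b w) v) b)" if "(v, w) \<in> set L" for v w
  proof -
    have "{b. coord b w \<noteq> 0} \<subseteq> F"
      unfolding F_def using that by force
    then have "\<phi> v w = \<phi> v (\<Sum>b\<in>F. csc (coord b w) b)"
      using sum_coord \<open>finite F\<close> by metis
    then show ?thesis
      by (simp add: bilin_sum_right[OF \<phi> \<open>finite F\<close>] bilinD[OF \<phi>])
  qed
  define z where "z b = (\<Sum>(v, w)\<leftarrow>L. csc (coord b w) v)" for b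
  have "z b = 0" for b
  proof (rule eq_0_if_linear_functionals_vanish)
    fix \<rho> :: "'v \<Rightarrow> complex"
    assume \<rho>: "linear_functional \<rho>"
    have "\<rho> (z b) = pair_sum L (\<lambda>v w. \<rho> v * coord b w)"
      by (simp add: z_def linear_functional_sum_list[OF \<rho>] pair_sum_def split_def
          linear_functional_csc[OF \<rho>] mult.commute)
    then show "\<rho> (z b) = 0"
      using vanish[OF \<rho> linear_functional_coord] by simp
  qed
  have "pair_sum L \<phi> = (\<Sum>p\<leftarrow>L. \<Sum>b\<in>F. \<phi> (csc (coord b (snd p)) (fst p)) b)"
    unfolding pair_sum_def split_def by (rule arg_cong[where f = sum_list], rule map_cong) (auto simp: expand)
  also have "\<dots> = (\<Sum>b\<in>F. \<phi> (z b) b)"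
    by (simp add: sum_list_sum_swap[OF \<open>finite F\<close>] z_def bilin_sum_list_left[OF \<phi>] split_def)
  also have "\<dots> = 0"
    by (simp add: \<open>\<And>b. z b = 0\<close> bilin_zero[OF \<phi>])
  finally show ?thesis .
qed

lemma nondegD: "nondeg (UNIV :: 'a::calg set) 0 (*) \<Longrightarrow> \<forall>y. (x::'a) * y = 0 \<Longrightarrow> x = 0"
  unfolding nondeg_def by blast

lemma functional_sum_eq_0_by_nondeg:
  fixes g :: "'x \<Rightarrow> 'a::calg"
  assumes nd: "nondeg (UNIV :: 'a set) 0 (*)"
    and vanish: "\<And>d \<omega>. linear_functional \<omega> \<Longrightarrow> (\<Sum>x\<leftarrow>L. f x * \<omega> (g x * d)) = 0"
    and \<omega>: "linear_functional \<omega>"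
  shows "(\<Sum>x\<leftarrow>L. f x * \<omega> (g x)) = 0"
proof -
  define z where "z = (\<Sum>x\<leftarrow>L. csc (f x) (g x))"
  have "z * d = 0" for d
  proof (rule eq_0_if_linear_functionals_vanish)
    fix \<omega>' :: "'a \<Rightarrow> complex"
    assume \<omega>': "linear_functional \<omega>'"
    have "z * d = (\<Sum>x\<leftarrow>L. csc (f x) (g x * d))"
      by (simp add: z_def sum_list_mult_const[symmetric] mult_csc_left)
    then show "\<omega>' (z * d) = 0"
      using vanish[OF \<omega>'] by (simp add: linear_functional_sum_list[OF \<omega>'] linear_functional_csc[OF \<omega>'])
  qed
  then have "z = 0"
    using nondegD[OF nd] by blast
  then have "\<omega> z = 0"
    by (simp add: linear_functional_zero[OF \<omega>])
  then show ?thesis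
    by (simp add: z_def linear_functional_sum_list[OF \<omega>] linear_functional_csc[OF \<omega>])
qed

lemma pair_sum_eq_by_nondeg:
  fixes L L' :: "('a::calg \<times> 'b::calg) list"
  assumes nd: "nondeg (UNIV :: 'a set) 0 (*)" "nondeg (UNIV :: 'b set) 0 (*)"
    and agree: "\<And>c d \<psi>. bilin \<psi> \<Longrightarrow>
      pair_sum L (\<lambda>p q. \<psi> (p * c) (q * d)) = pair_sum L' (\<lambda>p q. \<psi> (p * c) (q * d))"
    and \<phi>: "bilin \<phi>"
  shows "pair_sum L \<phi> = pair_sum L' \<phi>"
proof -
  define N where "N = L @ map (\<lambda>(p, q). (- p, q)) L'"
  have N: "pair_sum N \<psi> = pair_sum L \<psi> - pair_sum L' \<psi>" if "bilin \<psi>" for \<psi>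
    unfolding N_def using pair_sum_negate_left[OF that] by simp
  have "pair_sum N \<phi> = 0"
  proof (rule pair_sum_eq_0_if_product_functionals_vanish[OF _ \<phi>])
    fix \<rho> :: "'a \<Rightarrow> complex" and \<omega> :: "'b \<Rightarrow> complex"
    assume \<rho>: "linear_functional \<rho>" and \<omega>: "linear_functional \<omega>"
    have "(\<Sum>x\<leftarrow>N. \<rho> (fst x) * \<omega> (snd x)) = 0"
    proof (rule functional_sum_eq_0_by_nondeg[OF nd(2) _ \<omega>])
      fix d and \<omega>' :: "'b \<Rightarrow> complex" assume \<omega>': "linear_functional \<omega>'"
      have "(\<Sum>x\<leftarrow>N. \<omega>' (snd x * d) * \<rho> (fst x)) = 0"
      proof (rule functional_sum_eq_0_by_nondeg[OF nd(1) _ \<rho>])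
        fix c and \<rho>' :: "'a \<Rightarrow> complex" assume \<rho>': "linear_functional \<rho>'"
        have "bilin (\<lambda>p q. \<rho>' (p * c) * \<omega>' (q * d))"
          by (rule bilin_compose_clinear[OF bilin_product_functionals[OF \<rho>' \<omega>']
                clinear_mult_right clinear_mult_right])
        then have "pair_sum N (\<lambda>p q. \<rho>' (p * c) * \<omega>' (q * d)) = 0"
          using N agree[OF bilin_product_functionals[OF \<rho>' \<omega>']] by simp
        then show "(\<Sum>x\<leftarrow>N. \<omega>' (snd x * d) * \<rho>' (fst x * c)) = 0"
          by (simp add: pair_sum_conv_sum_list mult.commute)
      qed
      then show "(\<Sum>x\<leftarrow>N. \<rho> (fst x) * \<omega>' (snd x * d)) = 0"
        by (simp add: mult.commute)
    qed
    then show "pair_sum N (\<lambda>v w. \<rho> v * \<omega> w) = 0"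
      by (simp add: pair_sum_conv_sum_list)
  qed
  then show ?thesis
    using N[OF \<phi>] by simp
qed

definition list_tmul :: "('a::calg \<times> 'b::calg) list \<Rightarrow> ('a \<times> 'b) list \<Rightarrow> ('a \<times> 'b) list" where
  "list_tmul L M = concat (map (\<lambda>(a, b). map (\<lambda>(c, d). (a * c, b * d)) M) L)"

lemma pair_sum_list_tmul:
  "pair_sum (list_tmul L M) \<phi> = pair_sum L (\<lambda>a b. pair_sum M (\<lambda>c d. \<phi> (a * c) (b * d)))"
  by (simp add: list_tmul_def pair_sum_concat_map pair_sum_map)

lemma tmul_tens: "tmul (tens L) (tens M) = tens (list_tmul L M)"
proof -
  have "tmul (tens L) (tens M) \<phi> = pair_sum (list_tmul L M) \<phi>" if \<phi>: "bilin \<phi>" for \<phi>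
  proof -
    have inner: "bilin (\<lambda>c d. \<phi> (a * c) (b * d))" for a b
      by (rule bilin_compose_clinear[OF \<phi> clinear_mult_left clinear_mult_left])
    have outer: "bilin (\<lambda>a b. pair_sum M (\<lambda>c d. \<phi> (a * c) (b * d)))"
      by (rule bilin_pair_sum, rule bilin_compose_clinear[OF \<phi> clinear_mult_right clinear_mult_right])
    show ?thesis
      using \<phi> by (simp add: tmul_def tens_bilin[OF inner] tens_bilin[OF outer] pair_sum_list_tmul)
  qed
  then show ?thesis
    by (auto simp: tens_conv_pair_sum tmul_def)
qed

lemma list_tmul_append: "list_tmul (U @ U') M = list_tmul U M @ list_tmul U' M"
  by (simp add: list_tmul_def)

lemma tadd_tens: "tadd (tens L) (tens M) = tens (L @ M)"
  by (rule ext) (simp add: tadd_def tens_def)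

definition list_tsc :: "complex \<Rightarrow> ('a::calg \<times> 'b) list \<Rightarrow> ('a \<times> 'b) list" where
  "list_tsc c L = map (\<lambda>(a, b). (csc c a, b)) L"

lemma pair_sum_list_tsc: "bilin \<phi> \<Longrightarrow> pair_sum (list_tsc c L) \<phi> = c * pair_sum L \<phi>"
  by (simp add: list_tsc_def pair_sum_map bilin_csc_left pair_sum_cmult)

lemma tsc_tens: "tsc c (tens L) = tens (list_tsc c L)"
  by (rule ext) (simp add: tsc_def tens_conv_pair_sum pair_sum_list_tsc)

lemma list_tmul_list_tsc: "list_tmul (list_tsc k U) M = list_tsc k (list_tmul U M)"
  by (induct U) (auto simp: list_tmul_def list_tsc_def mult_csc_left)

lemma tens_map:
  assumes "clinear f" and "clinear g"
  shows "(\<lambda>\<phi>. if bilin \<phi> then tens L (\<lambda>x y. \<phi> (f x) (g y)) else 0) = tens (map (\<lambda>(x, y). (f x, g y)) L)"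
  using bilin_compose_clinear[OF _ assms] by (auto simp: tens_conv_pair_sum pair_sum_map)

lemma fst_one_tp: "fst (one_tp e) (tens L) = tens (map (\<lambda>(x, y). (x, e * y)) L)"
  using tens_map[OF clinear_id clinear_mult_left] by (simp add: one_tp_def)

lemma fst_tp_one: "fst (tp_one b) (tens L) = tens (map (\<lambda>(x, y). (b * x, y)) L)"
  using tens_map[OF clinear_mult_left clinear_id] by (simp add: tp_one_def)

lemma pair_sum_eq_if_tmul_tp_eq:
  assumes "tmul (tens U) (tp c d) = tmul (tens U') (tp c' d')" and "bilin \<psi>"
  shows "pair_sum U (\<lambda>p q. \<psi> (p * c) (q * d)) = pair_sum U' (\<lambda>p q. \<psi> (p * c') (q * d'))"
  using tens_eqD[OF assms(1)[unfolded tp_def tmul_tens] assms(2)] by (simp add: pair_sum_list_tmul)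

lemma tens_eq_by_right_mult:
  fixes U U' :: "('a::calg \<times> 'b::calg) list"
  assumes nd: "nondeg (UNIV :: 'a set) 0 (*)" "nondeg (UNIV :: 'b set) 0 (*)"
    and agree: "\<And>c d. tmul (tens U) (tp c d) = tmul (tens U') (tp c d)"
  shows "tens U = tens U'"
proof (rule tens_eqI)
  fix \<phi> :: "'a \<Rightarrow> 'b \<Rightarrow> complex"
  assume "bilin \<phi>"
  then show "pair_sum U \<phi> = pair_sum U' \<phi>"
    by (rule pair_sum_eq_by_nondeg[OF nd, rotated]) (rule pair_sum_eq_if_tmul_tp_eq[OF agree])
qed

lemma temb_inject:
  fixes u u' :: "('a::calg, 'b::calg) tf"
  assumes nd: "nondeg (UNIV :: 'a set) 0 (*)" "nondeg (UNIV :: 'b set) 0 (*)"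
    and "u \<in> tensors" "u' \<in> tensors" and "temb u = temb u'"
  shows "u = u'"
proof -
  obtain U U' where U: "u = tens U" and U': "u' = tens U'"
    using assms(3,4) by (auto elim!: tensorsE)
  have "tmul u (tp c d) = tmul u' (tp c d)" for c d
    using arg_cong[OF assms(5), of "\<lambda>m. fst m (tp c d)"] by (simp add: memb_def tp_def)
  then show ?thesis
    unfolding U U' by (rule tens_eq_by_right_mult[OF nd])
qed

section \<open>The covering elements \<open>\<Delta>(a)(1 \<otimes> b)\<close> and \<open>\<Delta>(a)(b \<otimes> 1)\<close>\<close>

lemma regular_mhaD:
  fixes D :: "'a::calg comult"
  assumes "regular_mha D"
  shows "nondeg (UNIV :: 'a set) 0 (*)"
    and "D (a + a') = madd tadd (D a) (D a')"
    and "D (csc c a) = msc tsc c (D a)"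
    and "covering_bij D"
  using assms unfolding regular_mha_def by blast+

lemma THE_temb:
  fixes M :: "('a::calg, 'a) tf mltp"
  assumes nd: "nondeg (UNIV :: 'a set) 0 (*)" and "\<exists>u\<in>tensors. M = temb u"
  shows "(THE u. u \<in> tensors \<and> M = temb u) \<in> tensors \<and> M = temb (THE u. u \<in> tensors \<and> M = temb u)"
proof -
  have "\<exists>!u. u \<in> tensors \<and> M = temb u"
    using assms(2) temb_inject[OF nd nd] by blast
  then show ?thesis
    by (rule theI')
qed

lemma cov1_spec:
  assumes "regular_mha D"
  shows "cov1 D a b \<in> tensors \<and> mmul (D a) (one_tp b) = temb (cov1 D a b)"
  unfolding cov1_def
  using regular_mhaD[OF assms] by (intro THE_temb) (auto simp: covering_bij_def)

lemma cov3_spec: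
  assumes "regular_mha D"
  shows "cov3 D a b \<in> tensors \<and> mmul (D a) (tp_one b) = temb (cov3 D a b)"
  unfolding cov3_def
  using regular_mhaD[OF assms] by (intro THE_temb) (auto simp: covering_bij_def)

definition cov1_list :: "'a::calg comult \<Rightarrow> 'a \<Rightarrow> 'a \<Rightarrow> ('a \<times> 'a) list" where
  "cov1_list D a b = (SOME U. cov1 D a b = tens U)"

definition cov3_list :: "'a::calg comult \<Rightarrow> 'a \<Rightarrow> 'a \<Rightarrow> ('a \<times> 'a) list" where
  "cov3_list D a b = (SOME U. cov3 D a b = tens U)"

lemma cov1_eq_tens:
  assumes "regular_mha D"
  shows "cov1 D a b = tens (cov1_list D a b)"
proof -
  obtain U where "cov1 D a b = tens U"
    using cov1_spec[OF assms] by (blast elim: tensorsE)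
  then show ?thesis
    unfolding cov1_list_def by (rule someI)
qed

lemma cov3_eq_tens:
  assumes "regular_mha D"
  shows "cov3 D a b = tens (cov3_list D a b)"
proof -
  obtain U where "cov3 D a b = tens U"
    using cov3_spec[OF assms] by (blast elim: tensorsE)
  then show ?thesis
    unfolding cov3_list_def by (rule someI)
qed

lemma comult_one_tp_tp:
  assumes "regular_mha D"
  shows "fst (D a) (tp c (b * d)) = tmul (tens (cov1_list D a b)) (tp c d)"
proof -
  have "fst (mmul (D a) (one_tp b)) (tp c d) = fst (temb (cov1 D a b)) (tp c d)"
    using cov1_spec[OF assms] by simp
  then show ?thesis
    by (simp add: mmul_def tp_def fst_one_tp memb_def cov1_eq_tens[OF assms])
qed

lemma comult_tp_one_tp:
  assumes "regular_mha D"
  shows "fst (D a) (tp (b * c) d) = tmul (tens (cov3_list D a b)) (tp c d)"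
proof -
  have "fst (mmul (D a) (tp_one b)) (tp c d) = fst (temb (cov3 D a b)) (tp c d)"
    using cov3_spec[OF assms] by simp
  then show ?thesis
    by (simp add: mmul_def tp_def fst_tp_one memb_def cov3_eq_tens[OF assms])
qed

text \<open>Both sides are \<open>\<Delta>(a)(b \<otimes> e)\<close>, i.e.
  \<open>\<Delta>(a)(b \<otimes> 1)(1 \<otimes> e) = \<Delta>(a)(1 \<otimes> e)(b \<otimes> 1)\<close>.\<close>

lemma cov3_cov1_exchange:
  assumes r: "regular_mha D" and \<phi>: "bilin \<phi>"
  shows "pair_sum (cov3_list D a b) (\<lambda>p q. \<phi> p (q * e)) = pair_sum (cov1_list D a e) (\<lambda>p q. \<phi> (p * b) q)"
proof -
  note nd = regular_mhaD(1)[OF r]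
  have mult: "tmul (tens (cov3_list D a b)) (tp c (e * d)) = tmul (tens (cov1_list D a e)) (tp (b * c) d)" for c d
    using comult_tp_one_tp[OF r, of a b c "e * d"] comult_one_tp_tp[OF r, of a "b * c" e d] by simp
  have "pair_sum (map (\<lambda>(p, q). (p, q * e)) (cov3_list D a b)) \<phi>
      = pair_sum (map (\<lambda>(p, q). (p * b, q)) (cov1_list D a e)) \<phi>"
    by (rule pair_sum_eq_by_nondeg[OF nd nd _ \<phi>])
      (simp only: pair_sum_map mult.assoc, rule pair_sum_eq_if_tmul_tp_eq[OF mult])
  then show ?thesis
    by (simp add: pair_sum_map)
qed

lemma cov3_unique:
  assumes r: "regular_mha D" and "\<And>c d. fst (D a) (tp (b * c) d) = tmul (tens U) (tp c d)"
  shows "cov3 D a b = tens U"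
proof -
  note nd = regular_mhaD(1)[OF r]
  have "tens (cov3_list D a b) = tens U"
  proof (rule tens_eq_by_right_mult[OF nd nd])
    fix c d
    show "tmul (tens (cov3_list D a b)) (tp c d) = tmul (tens U) (tp c d)"
      using comult_tp_one_tp[OF r, of a b c d] assms(2)[of c d] by simp
  qed
  then show ?thesis
    by (simp add: cov3_eq_tens[OF r])
qed

lemma cov3_add:
  assumes r: "regular_mha D"
  shows "cov3 D (a + a') b = tadd (cov3 D a b) (cov3 D a' b)"
proof -
  have "cov3 D (a + a') b = tens (cov3_list D a b @ cov3_list D a' b)"
    by (intro cov3_unique[OF r])
      (simp add: regular_mhaD(2)[OF r] madd_def comult_tp_one_tp[OF r],
       simp add: tp_def tmul_tens tadd_tens list_tmul_append)
  then show ?thesis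
    by (simp add: cov3_eq_tens[OF r] tadd_tens)
qed

lemma cov3_csc:
  assumes r: "regular_mha D"
  shows "cov3 D (csc k a) b = tsc k (cov3 D a b)"
proof -
  have "cov3 D (csc k a) b = tens (list_tsc k (cov3_list D a b))"
    by (intro cov3_unique[OF r])
      (simp add: regular_mhaD(3)[OF r] msc_def comult_tp_one_tp[OF r],
       simp add: tp_def tmul_tens tsc_tens list_tmul_list_tsc)
  then show ?thesis
    by (simp add: cov3_eq_tens[OF r] tsc_tens)
qed

section \<open>The element \<open>\<Sum> a\<^sub>(\<^sub>1\<^sub>)x \<otimes> a\<^sub>(\<^sub>2\<^sub>)\<close> of R \<otimes> A\<close>

definition act_sum :: "('a \<Rightarrow> 'r \<Rightarrow> 'r::monoid_add) \<Rightarrow> ('a \<times> 'r) list \<Rightarrow> 'r" where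
  "act_sum act ds = sum_list (map (\<lambda>(b, y). act b y) ds)"

lemma act_sum_append [simp]: "act_sum act (ds @ ds') = act_sum act ds + act_sum act ds'"
  by (simp add: act_sum_def)

definition act_decomp :: "('a \<Rightarrow> 'r \<Rightarrow> 'r::monoid_add) \<Rightarrow> 'r \<Rightarrow> ('a \<times> 'r) list" where
  "act_decomp act x = (SOME ds. x = act_sum act ds)"

lemma module_algebraD:
  fixes D :: "'a::calg comult" and act :: "'a \<Rightarrow> 'r::calg \<Rightarrow> 'r"
  assumes "module_algebra D act"
  shows module_algebra_nondeg: "nondeg (UNIV :: 'r set) 0 (*)"
    and clinear_act_right: "clinear (act a)"
    and clinear_act_left: "clinear (\<lambda>a. act a x)"
    and act_mult: "act (a * b) x = act a (act b x)"
    and act_sum_surj: "\<exists>ds. x = act_sum act ds"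
  using assms unfolding module_algebra_def clinear_def act_sum_def by blast+

lemma act_sum_act_decomp:
  "module_algebra D act \<Longrightarrow> x = act_sum act (act_decomp act x)"
  unfolding act_decomp_def by (rule someI_ex) (rule act_sum_surj)

definition sw_list ::
    "'a::calg comult \<Rightarrow> ('a \<Rightarrow> 'r \<Rightarrow> 'r) \<Rightarrow> 'a \<Rightarrow> ('a \<times> 'r) list \<Rightarrow> ('r \<times> 'a) list" where
  "sw_list D act a ds = concat (map (\<lambda>(b, y). map (\<lambda>(p, q). (act p y, q)) (cov3_list D a b)) ds)"

lemma pair_sum_sw_list:
  "pair_sum (sw_list D act a ds) \<psi> = (\<Sum>(b, y)\<leftarrow>ds. pair_sum (cov3_list D a b) (\<lambda>p q. \<psi> (act p y) q))"
  by (induct ds) (auto simp: sw_list_def pair_sum_map)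

lemma sw_list_append: "sw_list D act a (ds @ ds') = sw_list D act a ds @ sw_list D act a ds'"
  by (simp add: sw_list_def)

lemma sw_conv_sw_list:
  assumes r: "regular_mha D" and m: "module_algebra D act"
  shows "sw D act a x = tens (sw_list D act a (act_decomp act x))"
proof -
  have "sw D act a x \<psi> = pair_sum (sw_list D act a (act_decomp act x)) \<psi>" if \<psi>: "bilin \<psi>" for \<psi>
    using \<psi> bilin_compose_clinear[OF \<psi> clinear_act_left[OF m] clinear_id]
    by (simp add: sw_def act_decomp_def act_sum_def pair_sum_sw_list cov3_eq_tens[OF r] tens_bilin split_def)
  then show ?thesis
    by (auto simp: tens_conv_pair_sum sw_def)
qed

lemma sw_list_mult_right:
  assumes r: "regular_mha D" and m: "module_algebra D act" and \<psi>: "bilin \<psi>"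
  shows "pair_sum (sw_list D act a ds) (\<lambda>p q. \<psi> p (q * e))
    = pair_sum (cov1_list D a e) (\<lambda>p q. \<psi> (act p (act_sum act ds)) q)"
proof -
  have \<psi>y: "bilin (\<lambda>p q. \<psi> (act p y) q)" for y
    by (rule bilin_compose_clinear[OF \<psi> clinear_act_left[OF m] clinear_id])
  have "pair_sum (sw_list D act a ds) (\<lambda>p q. \<psi> p (q * e))
      = (\<Sum>(b, y)\<leftarrow>ds. pair_sum (cov1_list D a e) (\<lambda>p q. \<psi> (act p (act b y)) q))"
    by (simp add: pair_sum_sw_list cov3_cov1_exchange[OF r \<psi>y] act_mult[OF m])
  also have "\<dots> = pair_sum (cov1_list D a e) (\<lambda>p q. \<Sum>(b, y)\<leftarrow>ds. \<psi> (act p (act b y)) q)"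
    by (induct ds) (auto simp: pair_sum_add_fun)
  also have "\<dots> = pair_sum (cov1_list D a e) (\<lambda>p q. \<psi> (act p (act_sum act ds)) q)"
    by (simp add: act_sum_def clinear_sum_list[OF clinear_act_right[OF m]] bilin_sum_list_left[OF \<psi>] split_def)
  finally show ?thesis .
qed

lemma sw_list_eq:
  fixes D :: "'a::calg comult" and act :: "'a \<Rightarrow> 'r::calg \<Rightarrow> 'r"
  assumes r: "regular_mha D" and m: "module_algebra D act"
    and "act_sum act ds = act_sum act ds'" and \<psi>: "bilin \<psi>"
  shows "pair_sum (sw_list D act a ds) \<psi> = pair_sum (sw_list D act a ds') \<psi>"
proof (rule pair_sum_eq_by_nondeg[OF module_algebra_nondeg[OF m] regular_mhaD(1)[OF r] _ \<psi>])
  fix c e and \<chi> :: "'r \<Rightarrow> 'a \<Rightarrow> complex"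
  assume "bilin \<chi>"
  then have "bilin (\<lambda>p q. \<chi> (p * c) q)"
    by (rule bilin_compose_clinear[OF _ clinear_mult_right clinear_id])
  from sw_list_mult_right[OF r m this] show
    "pair_sum (sw_list D act a ds) (\<lambda>p q. \<chi> (p * c) (q * e))
      = pair_sum (sw_list D act a ds') (\<lambda>p q. \<chi> (p * c) (q * e))"
    using assms(3) by simp
qed

lemma sw_eq_tens_sw_list:
  assumes r: "regular_mha D" and m: "module_algebra D act" and "x = act_sum act ds"
  shows "sw D act a x = tens (sw_list D act a ds)"
  unfolding sw_conv_sw_list[OF r m]
  by (rule tens_eqI, rule sw_list_eq[OF r m]) (use act_sum_act_decomp[OF m] assms(3) in auto)

lemma sw_in_tensors: "regular_mha D \<Longrightarrow> module_algebra D act \<Longrightarrow> sw D act a x \<in> tensors"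
  by (simp add: sw_conv_sw_list)

lemma sw_apply:
  "regular_mha D \<Longrightarrow> module_algebra D act \<Longrightarrow> bilin \<psi> \<Longrightarrow>
    sw D act a x \<psi> = pair_sum (sw_list D act a (act_decomp act x)) \<psi>"
  by (simp add: sw_conv_sw_list tens_bilin)

lemma sw_add_left:
  "regular_mha D \<Longrightarrow> sw D act (a + a') x = tadd (sw D act a x) (sw D act a' x)"
  by (rule ext) (simp add: sw_def cov3_add tadd_def sum_list_addf split_def)

lemma sw_csc_left:
  "regular_mha D \<Longrightarrow> sw D act (csc k a) x = tsc k (sw D act a x)"
  by (rule ext) (simp add: sw_def cov3_csc tsc_def sum_list_const_mult split_def)

lemma sw_add_right:
  assumes r: "regular_mha D" and m: "module_algebra D act"
  shows "sw D act a (x + x') = tadd (sw D act a x) (sw D act a x')"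
proof -
  obtain ds ds' where "x = act_sum act ds" and "x' = act_sum act ds'"
    using act_sum_surj[OF m] by meson
  then have "x + x' = act_sum act (ds @ ds')"
    by simp
  then have "sw D act a (x + x') = tens (sw_list D act a (ds @ ds'))"
    by (rule sw_eq_tens_sw_list[OF r m])
  then show ?thesis
    using sw_eq_tens_sw_list[OF r m \<open>x = _\<close>] sw_eq_tens_sw_list[OF r m \<open>x' = _\<close>]
    by (simp add: tadd_tens sw_list_append)
qed

lemma sw_csc_right:
  fixes D :: "'a::calg comult" and act :: "'a \<Rightarrow> 'r::calg \<Rightarrow> 'r"
  assumes r: "regular_mha D" and m: "module_algebra D act"
  shows "sw D act a (csc k x) = tsc k (sw D act a x)"
proof -
  obtain ds where ds: "x = act_sum act ds"
    using act_sum_surj[OF m] by meson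
  then have csc: "csc k x = act_sum act (map (\<lambda>(b, y). (b, csc k y)) ds)"
    by (simp add: act_sum_def clinear_sum_list[OF clinear_scale] comp_def split_def
        clinear_csc[OF clinear_act_right[OF m]])
  have "tens (sw_list D act a (map (\<lambda>(b, y). (b, csc k y)) ds)) = tens (list_tsc k (sw_list D act a ds))"
    (is "tens ?lhs = tens ?rhs")
  proof (rule tens_eqI)
    fix \<psi> :: "'r \<Rightarrow> 'a \<Rightarrow> complex"
    assume \<psi>: "bilin \<psi>"
    have "pair_sum K (\<lambda>p q. \<psi> (act p (csc k y)) q) = k * pair_sum K (\<lambda>p q. \<psi> (act p y) q)" for K y
      by (simp add: pair_sum_conv_sum_list clinear_csc[OF clinear_act_right[OF m]]
          bilin_csc_left[OF \<psi>] sum_list_const_mult)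
    then show "pair_sum ?lhs \<psi> = pair_sum ?rhs \<psi>"
      by (simp add: pair_sum_sw_list pair_sum_list_tsc[OF \<psi>] sum_list_const_mult comp_def split_def)
  qed
  then show ?thesis
    by (simp add: sw_eq_tens_sw_list[OF r m csc] sw_eq_tens_sw_list[OF r m ds] tsc_tens)
qed

lemma bilin_eval_mult:
  assumes "t \<in> tensors" and \<psi>: "bilin \<psi>"
  shows "bilin (\<lambda>x a'. t (\<lambda>y b. \<psi> (x * y) (b * a')))"
proof -
  obtain K where t: "t = tens K"
    using assms(1) by (rule tensorsE)
  have "t (\<lambda>y b. \<psi> (x * y) (b * a')) = pair_sum K (\<lambda>y b. \<psi> (x * y) (b * a'))" for x a'
    unfolding t by (rule tens_bilin[OF bilin_compose_clinear[OF \<psi> clinear_mult_left clinear_mult_right]])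
  moreover have "bilin (\<lambda>x a'. pair_sum K (\<lambda>y b. \<psi> (x * y) (b * a')))"
    by (rule bilin_pair_sum, rule bilin_compose_clinear[OF \<psi> clinear_mult_right clinear_mult_left])
  ultimately show ?thesis
    by simp
qed

lemma bilin_smash_inner:
  assumes r: "regular_mha D" and m: "module_algebra D act" and \<psi>: "bilin \<psi>"
  shows "bilin (\<lambda>x' a'. sw D act a x' (\<lambda>y b. \<psi> (x * y) (b * a')))"
  using bilinD(2,4)[OF bilin_eval_mult[OF sw_in_tensors[OF r m] \<psi>]]
  unfolding bilin_def by (simp add: sw_add_right[OF r m] sw_csc_right[OF r m] tadd_def tsc_def)

lemma bilin_smash_outer:
  assumes r: "regular_mha D" and m: "module_algebra D act" and \<psi>: "bilin \<psi>"
  shows "bilin (\<lambda>x a. sw D act a x' (\<lambda>y b. \<psi> (x * y) (b * a')))"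
  using bilinD(1,3)[OF bilin_eval_mult[OF sw_in_tensors[OF r m] \<psi>]]
  unfolding bilin_def by (simp add: sw_add_left[OF r] sw_csc_left[OF r] tadd_def tsc_def)

definition smash_list ::
    "'a::calg comult \<Rightarrow> ('a \<Rightarrow> 'r::calg \<Rightarrow> 'r) \<Rightarrow> ('r \<times> 'a) list \<Rightarrow> ('r \<times> 'a) list \<Rightarrow> ('r \<times> 'a) list" where
  "smash_list D act L M = concat (map (\<lambda>(x, a). concat (map (\<lambda>(x', a').
      map (\<lambda>(y, b). (x * y, b * a')) (sw_list D act a (act_decomp act x'))) M)) L)"

lemma smash_mul_tens:
  assumes r: "regular_mha D" and m: "module_algebra D act"
  shows "smash_mul D act (tens L) (tens M) = tens (smash_list D act L M)"
proof -
  have "smash_mul D act (tens L) (tens M) \<psi> = pair_sum (smash_list D act L M) \<psi>" if \<psi>: "bilin \<psi>" for \<psi>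
  proof -
    have outer: "bilin (\<lambda>x a. pair_sum M (\<lambda>x' a'. sw D act a x' (\<lambda>y b. \<psi> (x * y) (b * a'))))"
      by (rule bilin_pair_sum, rule bilin_smash_outer[OF r m \<psi>])
    have "smash_mul D act (tens L) (tens M) \<psi>
        = pair_sum L (\<lambda>x a. pair_sum M (\<lambda>x' a'. sw D act a x' (\<lambda>y b. \<psi> (x * y) (b * a'))))"
      using \<psi> by (simp add: smash_mul_def tens_bilin[OF bilin_smash_inner[OF r m \<psi>]] tens_bilin[OF outer])
    also have "\<dots> = pair_sum (smash_list D act L M) \<psi>"
      by (simp add: smash_list_def pair_sum_concat_map pair_sum_map
          sw_apply[OF r m bilin_compose_clinear[OF \<psi> clinear_mult_left clinear_mult_right]])
    finally show ?thesis .
  qed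
  then show ?thesis
    by (auto simp: tens_conv_pair_sum smash_mul_def)
qed

section \<open>Sums of multipliers and the representation of R # A\<close>

definition msum :: "('v \<Rightarrow> 'w \<Rightarrow> 'c::calg mltp) \<Rightarrow> ('v \<times> 'w) list \<Rightarrow> 'c mltp" where
  "msum \<beta> xs = foldr (\<lambda>(v, w) acc. madd (+) (\<beta> v w) acc) xs (mzero 0)"

lemma fst_msum: "fst (msum \<beta> xs) c = (\<Sum>(v, w)\<leftarrow>xs. fst (\<beta> v w) c)"
  by (induct xs) (auto simp: msum_def madd_def mzero_def)

lemma snd_msum: "snd (msum \<beta> xs) c = (\<Sum>(v, w)\<leftarrow>xs. snd (\<beta> v w) c)"
  by (induct xs) (auto simp: msum_def madd_def mzero_def)

lemma msum_append: "msum \<beta> (L @ M) = madd (+) (msum \<beta> L) (msum \<beta> M)"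
  by (simp add: prod_eq_iff fun_eq_iff madd_def fst_msum snd_msum)

lemma msum_concat_map:
  shows fst_msum_concat_map: "fst (msum \<beta> (concat (map (\<lambda>(p, q). H p q) M))) c
      = (\<Sum>(p, q)\<leftarrow>M. fst (msum \<beta> (H p q)) c)"
    and snd_msum_concat_map: "snd (msum \<beta> (concat (map (\<lambda>(p, q). H p q) M))) c
      = (\<Sum>(p, q)\<leftarrow>M. snd (msum \<beta> (H p q)) c)"
  by (induct M) (auto simp: fst_msum snd_msum)

definition bilin_map :: "('v::calg \<Rightarrow> 'w::calg \<Rightarrow> 'c::calg) \<Rightarrow> bool" where
  "bilin_map f \<longleftrightarrow> (\<forall>w. clinear (\<lambda>v. f v w)) \<and> (\<forall>v. clinear (f v))"

lemma bilin_map_functional: "bilin_map f \<Longrightarrow> linear_functional l \<Longrightarrow> bilin (\<lambda>v w. l (f v w))"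
  unfolding bilin_map_def bilin_def clinear_def by (simp add: linear_functionalD)

lemma bilin_map_sum_list_eq:
  assumes f: "bilin_map f" and "tens xs = tens ys"
  shows "(\<Sum>(v, w)\<leftarrow>xs. f v w) = (\<Sum>(v, w)\<leftarrow>ys. f v w)"
proof -
  have "(\<Sum>(v, w)\<leftarrow>xs. f v w) - (\<Sum>(v, w)\<leftarrow>ys. f v w) = 0"
  proof (rule eq_0_if_linear_functionals_vanish)
    fix l :: "'c \<Rightarrow> complex"
    assume l: "linear_functional l"
    have diff: "l (u - u') = l u - l u'" for u u'
      using linear_functional_add[OF l, of "u - u'" u'] by simp
    have "l (\<Sum>(v, w)\<leftarrow>zs. f v w) = pair_sum zs (\<lambda>v w. l (f v w))" for zs
      by (simp add: linear_functional_sum_list[OF l] pair_sum_def split_def)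
    then show "l ((\<Sum>(v, w)\<leftarrow>xs. f v w) - (\<Sum>(v, w)\<leftarrow>ys. f v w)) = 0"
      using tens_eqD[OF assms(2) bilin_map_functional[OF f l]] by (simp add: diff)
  qed
  then show ?thesis
    by simp
qed

lemma tmap_tens:
  assumes "\<And>c. bilin_map (\<lambda>v w. fst (\<beta> v w) c)" and "\<And>c. bilin_map (\<lambda>v w. snd (\<beta> v w) c)"
  shows "tmap MCzero MCadd \<beta> (tens xs) = msum \<beta> xs"
proof -
  have ys: "tens (SOME ys. tens ys = tens xs) = tens xs"
    by (rule someI) (rule refl)
  have "msum \<beta> (SOME ys. tens ys = tens xs) = msum \<beta> xs"
    using bilin_map_sum_list_eq[OF assms(1) ys] bilin_map_sum_list_eq[OF assms(2) ys]
    by (simp add: prod_eq_iff fun_eq_iff fst_msum snd_msum)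
  then show ?thesis
    unfolding tmap_def msum_def .
qed

lemma MC_clinear:
  assumes "MC m"
  shows MC_clinear_fst: "clinear (fst m)" and MC_clinear_snd: "clinear (snd m)"
  using assms unfolding is_mult_def lin_on_def clinear_def by auto

lemma hom_MCD:
  assumes "hom_MC f"
  shows "MC (f a)" and "f (a + b) = madd (+) (f a) (f b)" and "f (csc k a) = msc csc k (f a)"
    and "f (a * b) = mmul (f a) (f b)"
  using assms unfolding hom_MC_def by blast+

context
  fixes piA :: "'a::calg \<Rightarrow> 'c::calg mltp" and piR :: "'r::calg \<Rightarrow> 'c mltp"
  assumes hA: "hom_MC piA" and hR: "hom_MC piR"
begin

lemma bilin_map_rep:
  shows "bilin_map (\<lambda>x a. fst (mmul (piR x) (piA a)) c)"
    and "bilin_map (\<lambda>x a. snd (mmul (piR x) (piA a)) c)"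
  using MC_clinear[OF hom_MCD(1)[OF hA]] MC_clinear[OF hom_MCD(1)[OF hR]]
  by (auto simp: bilin_map_def clinear_def mmul_def hom_MCD(2,3)[OF hR] hom_MCD(2,3)[OF hA] madd_def msc_def)

lemma tmap_rep_tens:
  "tmap MCzero MCadd (\<lambda>x a. mmul (piR x) (piA a)) (tens xs) = msum (\<lambda>x a. mmul (piR x) (piA a)) xs"
  by (rule tmap_tens[OF bilin_map_rep])

lemma msum_rep_list_tsc:
  "msum (\<lambda>x a. mmul (piR x) (piA a)) (list_tsc k L) = msc csc k (msum (\<lambda>x a. mmul (piR x) (piA a)) L)"
  by (simp add: prod_eq_iff fun_eq_iff fst_msum snd_msum list_tsc_def msc_def mmul_def hom_MCD(3)[OF hR]
      clinear_sum_list[OF clinear_scale] clinear_csc[OF MC_clinear_snd[OF hom_MCD(1)[OF hA]]]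
      comp_def split_def)

lemma msum_rep_map_mult:
  "msum (\<lambda>x a. mmul (piR x) (piA a)) (map (\<lambda>(y, b). (x * y, b * a')) K)
    = mmul (piR x) (mmul (msum (\<lambda>x a. mmul (piR x) (piA a)) K) (piA a'))"
  by (simp add: prod_eq_iff fun_eq_iff fst_msum snd_msum mmul_def hom_MCD(4)[OF hR] hom_MCD(4)[OF hA]
      clinear_sum_list[OF MC_clinear_fst[OF hom_MCD(1)[OF hR]]]
      clinear_sum_list[OF MC_clinear_snd[OF hom_MCD(1)[OF hA]]] split_def comp_def)

lemma msum_rep_smash_list:
  assumes r: "regular_mha D" and m: "module_algebra D act"
    and comm: "\<forall>a x. MCmul (piA a) (piR x) = tmap MCzero MCadd (\<lambda>y b. MCmul (piR y) (piA b)) (sw D act a x)"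
  shows "msum (\<lambda>x a. mmul (piR x) (piA a)) (smash_list D act L M)
    = mmul (msum (\<lambda>x a. mmul (piR x) (piA a)) L) (msum (\<lambda>x a. mmul (piR x) (piA a)) M)"
    (is "msum ?\<pi> _ = _")
proof -
  have sw: "msum ?\<pi> (sw_list D act a (act_decomp act x')) = mmul (piA a) (piR x')" for a x'
    using comm by (simp add: sw_conv_sw_list[OF r m] tmap_rep_tens)
  have entry: "msum ?\<pi> (map (\<lambda>(y, b). (x * y, b * a')) (sw_list D act a (act_decomp act x')))
      = mmul (mmul (piR x) (piA a)) (mmul (piR x') (piA a'))" for x a x' a'
    unfolding msum_rep_map_mult sw by (simp add: mmul_def comp_assoc)
  have fst_linear: "clinear (fst (piR x))" "clinear (fst (piA a))" for x a
    using MC_clinear_fst hom_MCD(1) hA hR by blast+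
  have snd_linear: "clinear (snd (piR x))" "clinear (snd (piA a))" for x a
    using MC_clinear_snd hom_MCD(1) hA hR by blast+
  show ?thesis
  proof (rule prod_eqI; rule ext)
    fix c
    show "fst (msum ?\<pi> (smash_list D act L M)) c = fst (mmul (msum ?\<pi> L) (msum ?\<pi> M)) c"
      unfolding smash_list_def fst_msum_concat_map entry
      by (simp add: fst_msum mmul_def split_def
          clinear_sum_list[OF fst_linear(1)] clinear_sum_list[OF fst_linear(2)])
    have "snd (msum ?\<pi> (smash_list D act L M)) c
        = (\<Sum>(x, a)\<leftarrow>L. \<Sum>(x', a')\<leftarrow>M. snd (piA a') (snd (piR x') (snd (piA a) (snd (piR x) c))))"
      unfolding smash_list_def snd_msum_concat_map entry by (simp add: mmul_def)
    also have "\<dots> = snd (mmul (msum ?\<pi> L) (msum ?\<pi> M)) c"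
      by (simp add: sum_list_swap[of _ L M] snd_msum mmul_def split_def
          clinear_sum_list[OF snd_linear(1)] clinear_sum_list[OF snd_linear(2)])
    finally show "snd (msum ?\<pi> (smash_list D act L M)) c = snd (mmul (msum ?\<pi> L) (msum ?\<pi> M)) c" .
  qed
qed

end

theorem proposition5p10:
  fixes D :: "'a::calg comult" and act :: "'a \<Rightarrow> 'r::calg \<Rightarrow> 'r"
    and piA :: "'a \<Rightarrow> 'c::calg mltp" and piR :: "'r \<Rightarrow> 'c mltp"
  assumes "regular_mha D"
    and "module_algebra D act"
    and "nondeg (UNIV :: 'c set) 0 (*)"
    and "hom_MC piA" and "hom_MC piR"
    and "\<forall>a x. MCmul (piA a) (piR x) = tmap MCzero MCadd (\<lambda>y b. MCmul (piR y) (piA b)) (sw D act a x)"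
  shows "(\<forall>t\<in>tensors. \<forall>s\<in>tensors.
            tmap MCzero MCadd (\<lambda>x a. MCmul (piR x) (piA a)) (tadd t s) =
              MCadd (tmap MCzero MCadd (\<lambda>x a. MCmul (piR x) (piA a)) t) (tmap MCzero MCadd (\<lambda>x a. MCmul (piR x) (piA a)) s)) \<and>
         (\<forall>c. \<forall>t\<in>tensors.
            tmap MCzero MCadd (\<lambda>x a. MCmul (piR x) (piA a)) (tsc c t) =
              MCsc c (tmap MCzero MCadd (\<lambda>x a. MCmul (piR x) (piA a)) t)) \<and>
         (\<forall>t\<in>tensors. \<forall>s\<in>tensors.
            tmap MCzero MCadd (\<lambda>x a. MCmul (piR x) (piA a)) (smash_mul D act t s) =
              MCmul (tmap MCzero MCadd (\<lambda>x a. MCmul (piR x) (piA a)) t)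
                    (tmap MCzero MCadd (\<lambda>x a. MCmul (piR x) (piA a)) s))"
proof -
  note r = assms(1) and m = assms(2) and hA = assms(4) and hR = assms(5)
  let ?\<pi> = "\<lambda>x a. MCmul (piR x) (piA a)"
  have \<pi>_tens: "tmap MCzero MCadd ?\<pi> (tens L) = msum ?\<pi> L" for L
    by (rule tmap_rep_tens[OF hA hR])
  show ?thesis
    unfolding tensors_def
    by (auto simp: \<pi>_tens tadd_tens tsc_tens smash_mul_tens[OF r m] msum_append
        msum_rep_list_tsc[OF hA hR] msum_rep_smash_list[OF hA hR r m assms(6)])
qed

end
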